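(* Let $P$ be an orthogonal polygon without holes, let $\mathcal{R}$ be a partial solution for $P$ which does not completely cover $P$, and let $S$ be any valid square. Define $D_x=\{(x,y)\in\mathbb{Z}^2 : \exists x' \text{ that is the } x\text{-coordinate of a vertex of } P \text{ or of a corner of a rec-pack in } \mathcal{R}\cup\{S\} \text{ with } |x-x'|\le 1, \text{ and } y \text{ is the } y\text{-coordinate of a vertex of } P\}$ and $D_y=\{(x,y)\in\mathbb{Z}^2 : \exists y' \text{ that is the } y\text{-coordinate of a vertex of } P \text{ or of a corner of a rec-pack in } \mathcal{R}\cup\{S\} \text{ with } |y-y'|\le 1, \text{ and } x \text{ is the } x\text{-coordinate of a vertex of } P\}$. Let $p,p_1$ be adjacent nodes of $G^{\mathcal{R}}(P)$ such that $p$ lies in $S$ and $p_1$ does not lie in $S$. Then there is a neighbour $p'$ of $p$ in $G^{\mathcal{R}}(P)$ such that $p'$ does not lie in $S$, and $p$ and $p'$ both lie in $S^\star$ for some maximal square $S^\star$ having a corner in $D_x\cup D_y$.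
   Context: $P$ is a simple polygon with integer vertex coordinates and axis-parallel edges. A valid square is an axis-parallel square contained in $P$; it is maximal if no larger-area valid square contains it. A block is a unit square with lattice-point corners lying inside $P$. The associated graph $G(P)$ has the blocks as nodes, two blocks adjacent if some valid square contains both. A rec-pack is an axis-parallel rectangle contained in $P$ of dimensions $t\times \eta t$ or $\eta t\times t$ with $\eta\in\mathbb{N}$ (a valid square is a rec-pack); its extraction $\mathsf{ext}(R)$ is the set of the $\eta$ side-$t$ squares tiling $R$, and $\mathsf{ext}(\mathcal{R})=\bigcup_{R\in\mathcal{R}}\mathsf{ext}(R)$. A set $\mathcal{R}'$ of rec-packs is a minimum covering if $\mathsf{ext}(\mathcal{R}')$ is a minimum-cardinality set of valid squares with union $P$ and distinct rec-packs have disjoint extractions. A partial solution is a subset of some minimum covering. $G^{\mathcal{R}}(P)$ is the subgraph of $G(P)$ induced by the blocks not covered by rec-packs of $\mathcal{R}$. *)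

theory Defs
  imports "HOL-Analysis.Analysis"
begin

type_synonym pt = "real \<times> real"

definition rpt :: "int \<times> int \<Rightarrow> pt" where
  "rpt v = (real_of_int (fst v), real_of_int (snd v))"

fun poly_path :: "pt list \<Rightarrow> real \<Rightarrow> pt" where
  "poly_path [] = linepath 0 0"
| "poly_path [v] = linepath v v"
| "poly_path [v, w] = linepath v w"
| "poly_path (v # w # u # vs) = linepath v w +++ poly_path (w # u # vs)"

definition closed_poly_path :: "(int \<times> int) list \<Rightarrow> real \<Rightarrow> pt" where
  "closed_poly_path vs = poly_path (map rpt (vs @ [hd vs]))"

definition nxt :: "'a list \<Rightarrow> nat \<Rightarrow> 'a" where
  "nxt vs i = vs ! (Suc i mod length vs)"

definition horiz_edge :: "(int \<times> int) list \<Rightarrow> nat \<Rightarrow> bool" where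
  "horiz_edge vs i \<longleftrightarrow> snd (vs ! i) = snd (nxt vs i) \<and> fst (vs ! i) \<noteq> fst (nxt vs i)"

definition vert_edge :: "(int \<times> int) list \<Rightarrow> nat \<Rightarrow> bool" where
  "vert_edge vs i \<longleftrightarrow> fst (vs ! i) = fst (nxt vs i) \<and> snd (vs ! i) \<noteq> snd (nxt vs i)"

text \<open>An orthogonal (simple, hence hole-free) polygon given by its cyclic list of integer
  vertices: every edge is axis-parallel and non-degenerate, horizontal and vertical edges
  alternate (so every listed vertex is a genuine corner), and the boundary is a simple
  closed curve.\<close>
definition ortho_polygon :: "(int \<times> int) list \<Rightarrow> bool" where
  "ortho_polygon vs \<longleftrightarrow> length vs \<ge> 4 \<and>
     (\<forall>i < length vs. (horiz_edge vs i \<or> vert_edge vs i) \<and>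
        (horiz_edge vs i \<longleftrightarrow> vert_edge vs (Suc i mod length vs))) \<and>
     simple_path (closed_poly_path vs)"

definition region :: "(int \<times> int) list \<Rightarrow> pt set" where
  "region vs = path_image (closed_poly_path vs) \<union> inside (path_image (closed_poly_path vs))"

definition sq :: "pt \<Rightarrow> real \<Rightarrow> pt set" where
  "sq c t = cbox c (fst c + t, snd c + t)"

definition valid_square :: "(int \<times> int) list \<Rightarrow> pt set \<Rightarrow> bool" where
  "valid_square vs Q \<longleftrightarrow> (\<exists>c t. t > 0 \<and> Q = sq c t) \<and> Q \<subseteq> region vs"

definition maximal_square :: "(int \<times> int) list \<Rightarrow> pt set \<Rightarrow> bool" where
  "maximal_square vs Q \<longleftrightarrow> valid_square vs Q \<and>
     \<not> (\<exists>Q'. valid_square vs Q' \<and> Q \<subseteq> Q' \<and> measure lebesgue Q' > measure lebesgue Q)"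

definition block :: "int \<times> int \<Rightarrow> pt set" where
  "block p = sq (rpt p) 1"

definition is_block :: "(int \<times> int) list \<Rightarrow> int \<times> int \<Rightarrow> bool" where
  "is_block vs p \<longleftrightarrow> block p \<subseteq> region vs"

definition adjG :: "(int \<times> int) list \<Rightarrow> int \<times> int \<Rightarrow> int \<times> int \<Rightarrow> bool" where
  "adjG vs p q \<longleftrightarrow> is_block vs p \<and> is_block vs q \<and> p \<noteq> q \<and>
     (\<exists>Q. valid_square vs Q \<and> block p \<subseteq> Q \<and> block q \<subseteq> Q)"

definition rec_pack :: "(int \<times> int) list \<Rightarrow> pt set \<Rightarrow> bool" where
  "rec_pack vs R \<longleftrightarrow> R \<subseteq> region vs \<and>
     (\<exists>a b t (\<eta>::nat). t > 0 \<and> \<eta> \<ge> 1 \<and>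
        (R = cbox (a, b) (a + real \<eta> * t, b + t) \<or> R = cbox (a, b) (a + t, b + real \<eta> * t)))"

definition ext :: "pt set \<Rightarrow> pt set set" where
  "ext R = {sq (a + real k * t, b) t | a b t (\<eta>::nat) k.
              t > 0 \<and> k < \<eta> \<and> R = cbox (a, b) (a + real \<eta> * t, b + t)}
         \<union> {sq (a, b + real k * t) t | a b t (\<eta>::nat) k.
              t > 0 \<and> k < \<eta> \<and> R = cbox (a, b) (a + t, b + real \<eta> * t)}"

definition ext_set :: "pt set set \<Rightarrow> pt set set" where
  "ext_set RR = (\<Union>R\<in>RR. ext R)"

definition square_cover :: "(int \<times> int) list \<Rightarrow> pt set set \<Rightarrow> bool" where
  "square_cover vs Q \<longleftrightarrow> finite Q \<and> (\<forall>S\<in>Q. valid_square vs S) \<and> \<Union>Q = region vs"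

definition min_covering :: "(int \<times> int) list \<Rightarrow> pt set set \<Rightarrow> bool" where
  "min_covering vs RR \<longleftrightarrow> (\<forall>R\<in>RR. rec_pack vs R) \<and>
     square_cover vs (ext_set RR) \<and>
     (\<forall>Q. square_cover vs Q \<longrightarrow> card (ext_set RR) \<le> card Q) \<and>
     (\<forall>R1\<in>RR. \<forall>R2\<in>RR. R1 \<noteq> R2 \<longrightarrow> ext R1 \<inter> ext R2 = {})"

definition partial_solution :: "(int \<times> int) list \<Rightarrow> pt set set \<Rightarrow> bool" where
  "partial_solution vs RR \<longleftrightarrow> (\<exists>M. min_covering vs M \<and> RR \<subseteq> M)"

definition uncovered :: "(int \<times> int) list \<Rightarrow> pt set set \<Rightarrow> int \<times> int \<Rightarrow> bool" where
  "uncovered vs RR p \<longleftrightarrow> is_block vs p \<and> \<not> block p \<subseteq> \<Union>RR"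

definition adjGR :: "(int \<times> int) list \<Rightarrow> pt set set \<Rightarrow> int \<times> int \<Rightarrow> int \<times> int \<Rightarrow> bool" where
  "adjGR vs RR p q \<longleftrightarrow> uncovered vs RR p \<and> uncovered vs RR q \<and> adjG vs p q"

definition rect_corners :: "pt set \<Rightarrow> pt set" where
  "rect_corners R = {(x, y) | x y a b c d. R = cbox (a, b) (c, d) \<and> a \<le> c \<and> b \<le> d \<and>
                       (x = a \<or> x = c) \<and> (y = b \<or> y = d)}"

definition D_x :: "(int \<times> int) list \<Rightarrow> pt set set \<Rightarrow> (int \<times> int) set" where
  "D_x vs RR = {(x, y). (\<exists>x'. (x' \<in> real_of_int ` fst ` set vs \<or>
                                (\<exists>R\<in>RR. x' \<in> fst ` rect_corners R)) \<and> \<bar>real_of_int x - x'\<bar> \<le> 1)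
                        \<and> y \<in> snd ` set vs}"

definition D_y :: "(int \<times> int) list \<Rightarrow> pt set set \<Rightarrow> (int \<times> int) set" where
  "D_y vs RR = {(x, y). (\<exists>y'. (y' \<in> real_of_int ` snd ` set vs \<or>
                                (\<exists>R\<in>RR. y' \<in> snd ` rect_corners R)) \<and> \<bar>real_of_int y - y'\<bar> \<le> 1)
                        \<and> x \<in> fst ` set vs}"

end

theory Submission
  imports Defs
begin

text \<open>The squares of maximal integer windows of blocks, i.e. of windows that cannot be
  enlarged by one row and one column, are maximal squares. Take such a window \<open>W\<close> of side
  \<open>T\<close> containing \<open>p\<close> and \<open>p\<^sub>1\<close>. If its upper right corner lies on a vertical and on a
  horizontal line through vertices of \<open>P\<close>, it is the required corner. Otherwise, say, its
  right side is on no vertical vertex line, so the column to its right repeats its last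
  column; maximality then forces non-blocks directly above and below \<open>W\<close>, whence its top side
  lies on a horizontal vertex line. Slide \<open>W\<close> sideways one column at a time: as long as
  neither vertical side comes within distance 1 of a vertical vertex line or of a corner of
  \<open>S\<close> or of a rec-pack, the entering and leaving columns are copies of their neighbours, so
  the window stays pinned between the blocked rows and keeps \<open>p\<close> and a node of
  \<open>G\<^sup>\<R>(P)\<close> outside \<open>S\<close>. It cannot cross all positions containing \<open>p\<close> in this way: the
  vertical sides of \<open>S\<close> would then be more than \<open>2T + 1\<close> apart, while the blocked rows
  confine \<open>S\<close> to a height less than \<open>T + 2\<close>.\<close>

section \<open>Squares, blocks and the region of the polygon\<close>

lemma sq_Pair: "sq (a, b) t = {a..a + t} \<times> {b..b + t}"
  by (simp add: sq_def cbox_Pair_eq)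

lemma block_Pair:
  "block (i, j) = {of_int i..of_int i + 1} \<times> {of_int j..of_int j + 1}"
  by (simp add: block_def rpt_def sq_Pair)

lemma sq_subset_sq_iff:
  assumes "0 \<le> s"
  shows "sq (a, b) s \<subseteq> sq (c, d) t \<longleftrightarrow> c \<le> a \<and> a + s \<le> c + t \<and> d \<le> b \<and> b + s \<le> d + t"
  using assms by (simp add: sq_Pair times_subset_iff)

lemma block_subset_sq_iff:
  "block (i, j) \<subseteq> sq (c, d) t \<longleftrightarrow>
     c \<le> of_int i \<and> of_int i + 1 \<le> c + t \<and> d \<le> of_int j \<and> of_int j + 1 \<le> d + t"
  by (simp add: block_def rpt_def sq_subset_sq_iff)

lemma measure_sq: "0 \<le> t \<Longrightarrow> measure lebesgue (sq (a, b) t) = t * t"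
  unfolding sq_def by (simp add: measure_completion[OF cbox_borel[unfolded sets_lborel[symmetric]]]
    measure_lborel_cbox_eq Basis_prod_def)

lemma valid_squareE:
  assumes "valid_square vs Q"
  obtains c d t where "0 < t" "Q = sq (c, d) t" "sq (c, d) t \<subseteq> region vs"
  using assms unfolding valid_square_def by (metis surj_pair)

lemma path_image_poly_path_subset:
  assumes "2 \<le> length L" "\<And>k. Suc k < length L \<Longrightarrow> closed_segment (L ! k) (L ! Suc k) \<subseteq> A"
  shows "path_image (poly_path L) \<subseteq> A"
  using assms
proof (induction L rule: poly_path.induct)
  case (4 v w u vs)
  have "path_image (poly_path (w # u # vs)) \<subseteq> A"
    using "4.IH" "4.prems"(2)[of "Suc k" for k] by fastforce
  moreover have "closed_segment v w \<subseteq> A"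
    using "4.prems"(2)[of 0] by simp
  ultimately show ?case
    using path_image_join_subset[of "linepath v w"] by auto
qed auto

lemma boundary_on_vertex_lines:
  assumes "ortho_polygon vs" "z \<in> path_image (closed_poly_path vs)"
  shows "fst z \<in> of_int ` fst ` set vs \<or> snd z \<in> of_int ` snd ` set vs"
proof -
  define A where "A = {z::pt. fst z \<in> of_int ` fst ` set vs \<or> snd z \<in> of_int ` snd ` set vs}"
  define L where "L = map rpt (vs @ [hd vs])"
  have len: "4 \<le> length vs"
    using assms(1) by (simp add: ortho_polygon_def)
  have "path_image (poly_path L) \<subseteq> A"
  proof (rule path_image_poly_path_subset)
    show "2 \<le> length L"
      using len by (simp add: L_def)
  next
    fix k assume "Suc k < length L"
    then have k: "k < length vs"
      by (simp add: L_def)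
    have "Suc k < length vs \<or> Suc k = length vs" "vs \<noteq> []"
      using k by auto
    then have ends: "L ! k = rpt (vs ! k)" "L ! Suc k = rpt (nxt vs k)"
      using k by (auto simp: L_def nxt_def nth_append hd_conv_nth)
    have "horiz_edge vs k \<or> vert_edge vs k"
      using assms(1) k unfolding ortho_polygon_def by blast
    moreover have "vs ! k \<in> set vs" "nxt vs k \<in> set vs"
      using k by (auto simp: nxt_def intro!: nth_mem mod_less_divisor)
    ultimately show "closed_segment (L ! k) (L ! Suc k) \<subseteq> A"
      by (auto simp: ends A_def rpt_def horiz_edge_def vert_edge_def
          closed_segment_same_fst closed_segment_same_snd)
  qed
  then show ?thesis
    using assms(2) by (auto simp: closed_poly_path_def L_def A_def)
qed

lemma closed_region: "ortho_polygon vs \<Longrightarrow> closed (region vs)"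
  unfolding region_def ortho_polygon_def
  by (simp add: closed_path_image_Un_inside simple_path_imp_path)

lemma bounded_region: "ortho_polygon vs \<Longrightarrow> bounded (region vs)"
  unfolding region_def ortho_polygon_def
  by (meson bounded_Un bounded_inside compact_imp_bounded compact_path_image simple_path_imp_path)

text \<open>An open box crossed by no line through a vertex misses the boundary, so by connectedness
  it lies entirely inside or entirely outside the polygon.\<close>
lemma box_subset_region:
  fixes a b c d :: int
  assumes "ortho_polygon vs" "a < b" "c < d"
    and "fst ` set vs \<inter> {a<..<b} = {}" "snd ` set vs \<inter> {c<..<d} = {}"
    and "z \<in> {of_int a<..<of_int b} \<times> {of_int c<..<of_int d}" "z \<in> region vs"
  shows "{of_int a..of_int b} \<times> {of_int c..of_int d} \<subseteq> region vs"
proof -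
  let ?C = "path_image (closed_poly_path vs)"
    and ?U = "{real_of_int a<..<real_of_int b} \<times> {real_of_int c<..<real_of_int d}"
  have "?U \<inter> ?C = {}"
    using assms(1,4,5) boundary_on_vertex_lines by fastforce
  moreover have "connected ?U"
    by (intro convex_connected convex_Times convex_real_interval)
  ultimately have "outside ?C \<inter> ?U = {}"
    using assms(6,7) inside_outside_intersect_connected unfolding region_def by blast
  then have "?U \<subseteq> region vs"
    unfolding region_def using union_with_inside by blast
  then have "closure ?U \<subseteq> region vs"
    using closed_region[OF assms(1)] closure_minimal by blast
  then show ?thesis
    using assms(2,3) by (simp add: closure_Times)
qed

lemma is_block_if_inner_point:
  assumes "ortho_polygon vs" "z \<in> {of_int i<..<of_int i + 1} \<times> {of_int j<..<of_int j + 1}"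
    and "z \<in> region vs"
  shows "is_block vs (i, j)"
proof -
  have "{i<..<i + 1} = {}" "{j<..<j + 1} = {}"
    by auto
  then show ?thesis
    using box_subset_region[OF assms(1), of i "i + 1" j "j + 1"] assms(2,3)
    by (auto simp: is_block_def block_Pair)
qed

text \<open>\<open>of_int i \<in> {c - 1<..<c + t}\<close> says that the unit interval \<open>[i, i + 1]\<close> overlaps the
  open interval \<open>(c, c + t)\<close>.\<close>
lemma is_block_if_meets_square:
  assumes "ortho_polygon vs" "sq (c, d) t \<subseteq> region vs" "0 < t"
    and "of_int i \<in> {c - 1<..<c + t}" "of_int j \<in> {d - 1<..<d + t}"
  shows "is_block vs (i, j)"
proof (rule is_block_if_inner_point[OF assms(1)])
  let ?z = "((max (of_int i) c + min (of_int i + 1) (c + t)) / 2,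
             (max (of_int j) d + min (of_int j + 1) (d + t)) / 2)"
  show "?z \<in> {of_int i<..<of_int i + 1} \<times> {of_int j<..<of_int j + 1}"
    using assms(4,5) by (auto simp: max_def min_def)
  have "?z \<in> sq (c, d) t"
    using assms(3-5) by (auto simp: sq_Pair max_def min_def)
  then show "?z \<in> region vs"
    using assms(2) by blast
qed

lemma is_block_shift_x:
  assumes "ortho_polygon vs" "i \<notin> fst ` set vs"
  shows "is_block vs (i - 1, j) \<longleftrightarrow> is_block vs (i, j)"
proof -
  have "{i - 1<..<i + 1} = {i}" "{j<..<j + 1} = {}"
    by auto
  then have "{of_int i - 1..of_int i + 1} \<times> {of_int j..of_int j + 1} \<subseteq> region vs"
    if "z \<in> {of_int i - 1<..<of_int i + 1} \<times> {of_int j<..<of_int j + 1}" "z \<in> region vs" for z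
    using box_subset_region[OF assms(1), of "i - 1" "i + 1" j "j + 1"] assms(2) that by simp
  moreover have "block (i - 1, j) \<union> block (i, j) \<subseteq> {of_int i - 1..of_int i + 1} \<times> {of_int j..of_int j + 1}"
    by (auto simp: block_Pair)
  ultimately have wide: "block (i - 1, j) \<subseteq> region vs \<and> block (i, j) \<subseteq> region vs"
    if "z \<in> {of_int i - 1<..<of_int i + 1} \<times> {of_int j<..<of_int j + 1}" "z \<in> region vs" for z
    using that by blast
  have "(of_int i - 1/2, of_int j + 1/2) \<in> block (i - 1, j) \<inter>
      {of_int i - 1<..<of_int i + 1} \<times> {of_int j<..<of_int j + 1}"
    "(of_int i + 1/2, of_int j + 1/2) \<in> block (i, j) \<inter>
      {of_int i - 1<..<of_int i + 1} \<times> {of_int j<..<of_int j + 1}"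
    by (auto simp: block_Pair)
  then show ?thesis
    unfolding is_block_def using wide by blast
qed

lemma is_block_shift_y:
  assumes "ortho_polygon vs" "j \<notin> snd ` set vs"
  shows "is_block vs (i, j - 1) \<longleftrightarrow> is_block vs (i, j)"
proof -
  have "{i<..<i + 1} = {}" "{j - 1<..<j + 1} = {j}"
    by auto
  then have "{of_int i..of_int i + 1} \<times> {of_int j - 1..of_int j + 1} \<subseteq> region vs"
    if "z \<in> {of_int i<..<of_int i + 1} \<times> {of_int j - 1<..<of_int j + 1}" "z \<in> region vs" for z
    using box_subset_region[OF assms(1), of i "i + 1" "j - 1" "j + 1"] assms(2) that by simp
  moreover have "block (i, j - 1) \<union> block (i, j) \<subseteq> {of_int i..of_int i + 1} \<times> {of_int j - 1..of_int j + 1}"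
    by (auto simp: block_Pair)
  ultimately have wide: "block (i, j - 1) \<subseteq> region vs \<and> block (i, j) \<subseteq> region vs"
    if "z \<in> {of_int i<..<of_int i + 1} \<times> {of_int j - 1<..<of_int j + 1}" "z \<in> region vs" for z
    using that by blast
  have "(of_int i + 1/2, of_int j - 1/2) \<in> block (i, j - 1) \<inter>
      {of_int i<..<of_int i + 1} \<times> {of_int j - 1<..<of_int j + 1}"
    "(of_int i + 1/2, of_int j + 1/2) \<in> block (i, j) \<inter>
      {of_int i<..<of_int i + 1} \<times> {of_int j - 1<..<of_int j + 1}"
    by (auto simp: block_Pair)
  then show ?thesis
    unfolding is_block_def using wide by blast
qed

section \<open>Windows of blocks\<close>

definition window :: "int \<Rightarrow> int \<Rightarrow> int \<Rightarrow> (int \<times> int) set" where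
  "window a b T = {a..<a + T} \<times> {b..<b + T}"

definition full_window :: "(int \<times> int \<Rightarrow> bool) \<Rightarrow> int \<Rightarrow> int \<Rightarrow> int \<Rightarrow> bool" where
  "full_window B a b T \<longleftrightarrow> (\<forall>c \<in> window a b T. B c)"

definition maximal_window :: "(int \<times> int \<Rightarrow> bool) \<Rightarrow> int \<Rightarrow> int \<Rightarrow> int \<Rightarrow> bool" where
  "maximal_window B a b T \<longleftrightarrow> 0 < T \<and> full_window B a b T \<and>
     (\<forall>a' \<in> {a - 1, a}. \<forall>b' \<in> {b - 1, b}. \<not> full_window B a' b' (T + 1))"

definition pinned_strip :: "(int \<times> int \<Rightarrow> bool) \<Rightarrow> int set \<Rightarrow> int \<Rightarrow> int \<Rightarrow> bool" where
  "pinned_strip B I b T \<longleftrightarrow> (\<forall>i \<in> I. \<forall>j \<in> {b..<b + T}. B (i, j)) \<and>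
     (\<exists>i \<in> I. \<not> B (i, b + T)) \<and> (\<exists>i \<in> I. \<not> B (i, b - 1))"

lemma swap_mem_window [simp]: "prod.swap c \<in> window b a T \<longleftrightarrow> c \<in> window a b T"
  by (cases c) (auto simp: window_def)

lemma full_window_swap [simp]: "full_window (B \<circ> prod.swap) b a T \<longleftrightarrow> full_window B a b T"
  unfolding full_window_def by (metis comp_apply swap_mem_window swap_swap)

lemma maximal_window_swap [simp]: "maximal_window (B \<circ> prod.swap) b a T \<longleftrightarrow> maximal_window B a b T"
  unfolding maximal_window_def by auto

lemma pinned_strip_maximal_window:
  assumes "0 < T" "pinned_strip B {a..<a + T} b T"
  shows "maximal_window B a b T"
proof -
  obtain i i' where "i \<in> {a..<a + T}" "\<not> B (i, b + T)" "i' \<in> {a..<a + T}" "\<not> B (i', b - 1)"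
    using assms(2) by (auto simp: pinned_strip_def)
  then have "\<not> full_window B a' b' (T + 1)" if "a' \<in> {a - 1, a}" "b' \<in> {b - 1, b}" for a' b'
    using that unfolding full_window_def window_def by (elim insertE; force)
  then show ?thesis
    using assms by (auto simp: maximal_window_def full_window_def window_def pinned_strip_def)
qed

lemma pinned_strip_exchange:
  assumes "pinned_strip B I b T" "\<exists>i \<in> I. \<exists>j \<in> {b..<b + T}. W (i, j)"
    and "e' \<in> I" "d' \<in> insert e (I - {d})"
    and "\<And>j. B (e, j) = B (e', j)" "\<And>j. B (d, j) = B (d', j)"
    and "\<And>j. W (d, j) \<Longrightarrow> B (d', j) \<Longrightarrow> W (d', j)"
  shows "pinned_strip B (insert e (I - {d})) b T \<and> (\<exists>i \<in> insert e (I - {d}). \<exists>j \<in> {b..<b + T}. W (i, j))"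
proof -
  let ?I = "insert e (I - {d})"
  have full: "\<forall>i \<in> ?I. \<forall>j \<in> {b..<b + T}. B (i, j)"
    using assms(1,3,5) by (auto simp: pinned_strip_def)
  have blocked: "\<exists>i \<in> ?I. \<not> B (i, r)" if "\<exists>i \<in> I. \<not> B (i, r)" for r
    using that assms(4,6) by (metis insert_Diff_single insert_iff)
  have "\<exists>i \<in> ?I. \<exists>j \<in> {b..<b + T}. W (i, j)"
    using assms(2,4,7) full by (metis insert_Diff_single insert_iff)
  then show ?thesis
    using full blocked assms(1) by (simp add: pinned_strip_def)
qed

section \<open>The sliding argument\<close>

definition near :: "real set \<Rightarrow> int \<Rightarrow> bool" where
  "near A k \<longleftrightarrow> (\<exists>x \<in> A. \<bar>of_int k - x\<bar> \<le> 1)"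

text \<open>The lattice abstraction of the situation of the theorem: \<open>blk\<close> holds for the blocks of
  \<open>P\<close>, \<open>free\<close> for the nodes of \<open>G\<^sup>\<R>(P)\<close> and \<open>inS\<close> for the blocks inside
  \<open>S = sq (sx, sy) st\<close>; \<open>vx\<close>, \<open>vy\<close> are the vertex coordinates of \<open>P\<close> and \<open>cx\<close>, \<open>cy\<close>
  the corner coordinates of \<open>S\<close> and of the rec-packs in \<open>\<R>\<close>.\<close>
locale block_grid =
  fixes blk free inS :: "int \<times> int \<Rightarrow> bool"
    and vx vy :: "int set" and cx cy :: "real set" and sx sy st :: real
  assumes blk_shift_x: "i \<notin> vx \<Longrightarrow> blk (i - 1, j) = blk (i, j)"
    and blk_shift_y: "j \<notin> vy \<Longrightarrow> blk (i, j - 1) = blk (i, j)"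
    and free_left: "free (i, j) \<Longrightarrow> blk (i - 1, j) \<Longrightarrow> \<not> free (i - 1, j) \<Longrightarrow>
      \<exists>c \<in> cx. of_int i \<le> c \<and> c < of_int i + 1"
    and free_right: "free (i, j) \<Longrightarrow> blk (i + 1, j) \<Longrightarrow> \<not> free (i + 1, j) \<Longrightarrow>
      \<exists>c \<in> cx. of_int i < c \<and> c \<le> of_int i + 1"
    and free_down: "free (i, j) \<Longrightarrow> blk (i, j - 1) \<Longrightarrow> \<not> free (i, j - 1) \<Longrightarrow>
      \<exists>c \<in> cy. of_int j \<le> c \<and> c < of_int j + 1"
    and free_up: "free (i, j) \<Longrightarrow> blk (i, j + 1) \<Longrightarrow> \<not> free (i, j + 1) \<Longrightarrow>
      \<exists>c \<in> cy. of_int j < c \<and> c \<le> of_int j + 1"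
    and inS_iff: "inS (i, j) \<longleftrightarrow>
      sx \<le> of_int i \<and> of_int i + 1 \<le> sx + st \<and> sy \<le> of_int j \<and> of_int j + 1 \<le> sy + st"
    and inS_imp_blk: "inS c \<Longrightarrow> blk c"
    and S_edges: "sx \<in> cx" "sx + st \<in> cx" "sy \<in> cy" "sy + st \<in> cy"
begin

lemma block_grid_transpose:
  "block_grid (blk \<circ> prod.swap) (free \<circ> prod.swap) (inS \<circ> prod.swap) vy vx cy cx sy sx st"
  by unfold_locales
    (auto simp: blk_shift_x blk_shift_y free_left free_right free_down free_up inS_iff inS_imp_blk S_edges)

lemma free_outside_S_shift_left:
  assumes "free (i, j)" "\<not> inS (i, j)" "blk (i - 1, j)" "\<forall>c \<in> cx. \<not> (of_int i \<le> c \<and> c < of_int i + 1)"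
  shows "free (i - 1, j) \<and> \<not> inS (i - 1, j)"
  using assms free_left[of i j] S_edges(2) by (auto simp: inS_iff)

lemma free_outside_S_shift_right:
  assumes "free (i, j)" "\<not> inS (i, j)" "blk (i + 1, j)" "\<forall>c \<in> cx. \<not> (of_int i < c \<and> c \<le> of_int i + 1)"
  shows "free (i + 1, j) \<and> \<not> inS (i + 1, j)"
  using assms free_right[of i j] S_edges(1) by (auto simp: inS_iff)

lemma maximal_window_pinned:
  assumes "maximal_window blk a b T" "a + T \<notin> vx"
  shows "pinned_strip blk {a..<a + T} b T"
proof -
  have full: "\<forall>i \<in> {a..<a + T}. \<forall>j \<in> {b..<b + T}. blk (i, j)"
    using assms(1) by (auto simp: maximal_window_def full_window_def window_def)
  have "full_window blk a b' (T + 1)"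
    if "b' \<in> {b - 1, b}" "\<forall>i \<in> {a..<a + T}. blk (i, if b' = b then b + T else b - 1)" for b'
  proof -
    have rows: "\<forall>i \<in> {a..<a + T}. \<forall>j \<in> {b'..<b' + T + 1}. blk (i, j)"
    proof (intro ballI)
      fix i j assume "i \<in> {a..<a + T}" "j \<in> {b'..<b' + T + 1}"
      moreover have "j \<in> {b..<b + T} \<or> j = (if b' = b then b + T else b - 1)"
        using that(1) \<open>j \<in> {b'..<b' + T + 1}\<close> by auto
      ultimately show "blk (i, j)"
        using full that(2) by auto
    qed
    have "blk (a + T, j) = blk (a + T - 1, j)" for j
      using blk_shift_x[OF assms(2)] by simp
    moreover have "a + T - 1 \<in> {a..<a + T}"
      using assms(1) by (simp add: maximal_window_def)
    ultimately have "\<forall>j \<in> {b'..<b' + T + 1}. blk (a + T, j)"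
      using rows by simp
    moreover have "{a..<a + (T + 1)} = insert (a + T) {a..<a + T}"
      using assms(1) by (auto simp: maximal_window_def)
    ultimately show ?thesis
      using rows by (auto simp: full_window_def window_def add.assoc)
  qed
  note extended = this
  have "\<exists>i \<in> {a..<a + T}. \<not> blk (i, b + T)" "\<exists>i \<in> {a..<a + T}. \<not> blk (i, b - 1)"
    using extended[of b] extended[of "b - 1"] assms(1) by (auto simp: maximal_window_def)
  then show ?thesis
    using full by (simp add: pinned_strip_def)
qed

lemma pinned_strip_top_in_vy:
  assumes "pinned_strip blk {a..<a + T} b T" "0 < T"
  shows "b + T \<in> vy"
  using assms blk_shift_y[of "b + T"] by (force simp: pinned_strip_def)

lemma pinned_strip_near_S_edge:
  assumes "0 < T" "pinned_strip blk {a..<a + T} b T" "inS (px, py)"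
    and "px \<in> {a..<a + T}" "py \<in> {b..<b + T}"
  shows "\<exists>k \<in> {px - T + 1..px + T}. \<exists>c \<in> cx. \<bar>of_int k - c\<bar> \<le> 1"
proof (rule ccontr)
  assume "\<not> ?thesis"
  then have far: "1 < \<bar>of_int k - c\<bar>" if "k \<in> {px - T + 1..px + T}" "c \<in> cx" for k c
    using that by force
  have p: "sx \<le> of_int px" "of_int px + 1 \<le> sx + st" "sy \<le> of_int py" "of_int py + 1 \<le> sy + st"
    using assms(3) by (simp_all add: inS_iff)
  have left: "sx < of_int px - of_int T"
  proof (rule ccontr)
    assume "\<not> ?thesis"
    then have "\<lfloor>sx\<rfloor> + 1 \<in> {px - T + 1..px + T}"
      using p(1) assms(1) by (simp, linarith)
    moreover have "\<bar>of_int (\<lfloor>sx\<rfloor> + 1) - sx\<bar> \<le> 1"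
      by linarith
    ultimately show False
      using far S_edges(1) by fastforce
  qed
  have right: "of_int px + of_int T + 1 < sx + st"
  proof (rule ccontr)
    assume close: "\<not> ?thesis"
    then have "min \<lfloor>sx + st\<rfloor> (px + T) \<in> {px - T + 1..px + T}"
      using p(2) assms(1) by (simp, linarith)
    moreover have "\<bar>of_int (min \<lfloor>sx + st\<rfloor> (px + T)) - (sx + st)\<bar> \<le> 1"
      using close by linarith
    ultimately show False
      using far S_edges(2) by fastforce
  qed
  obtain i i' where i: "i \<in> {a..<a + T}" "\<not> blk (i, b + T)" and i': "i' \<in> {a..<a + T}" "\<not> blk (i', b - 1)"
    using assms(2) by (auto simp: pinned_strip_def)
  have "\<not> inS (i, b + T)" "\<not> inS (i', b - 1)"
    using i(2) i'(2) inS_imp_blk by blast+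
  then have "sy + st < of_int b + of_int T + 1" "of_int b - 1 < sy"
    using i(1) i'(1) assms(4,5) left right p by (auto simp: inS_iff)
  then show False
    using left right assms(1,5) p by linarith
qed

definition pinned_window :: "int \<Rightarrow> int \<Rightarrow> int \<Rightarrow> int \<Rightarrow> bool" where
  "pinned_window px a b T \<longleftrightarrow> pinned_strip blk {a..<a + T} b T \<and> px \<in> {a..<a + T} \<and>
     (\<exists>i \<in> {a..<a + T}. \<exists>j \<in> {b..<b + T}. free (i, j) \<and> \<not> inS (i, j))"

text \<open>The leaving column and the entering column are copies of their neighbours inside the
  window, as no vertex line separates them, and a node outside \<open>S\<close> in the leaving column can
  be moved to its neighbour, as no corner of \<open>S\<close> or of a rec-pack is in between.\<close>
lemma pinned_window_step_right:
  assumes "pinned_window px a b T" "0 < T" "a + 1 \<le> px"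
    and "\<not> near (of_int ` vx \<union> cx) a" "\<not> near (of_int ` vx \<union> cx) (a + T)"
  shows "pinned_window px (a + 1) b T"
proof -
  have "a + 1 \<notin> vx" "a + T \<notin> vx" "\<forall>c \<in> cx. \<not> (of_int a < c \<and> c \<le> of_int a + 1)"
    using assms(4,5) by (force simp: near_def)+
  moreover have "insert (a + T) ({a..<a + T} - {a}) = {a + 1..<a + 1 + T}"
    using assms(2) by auto
  ultimately show ?thesis
    using assms(1-3) free_outside_S_shift_right[of a] blk_shift_x[of "a + T"] blk_shift_x[of "a + 1"]
      pinned_strip_exchange[of blk "{a..<a + T}" b T "\<lambda>c. free c \<and> \<not> inS c" "a + T - 1" "a + 1" "a + T" a]
    by (auto simp: pinned_window_def)
qed

lemma pinned_window_step_left: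
  assumes "pinned_window px a b T" "0 < T" "px \<le> a + T - 2"
    and "\<not> near (of_int ` vx \<union> cx) a" "\<not> near (of_int ` vx \<union> cx) (a + T)"
  shows "pinned_window px (a - 1) b T"
proof -
  have "a \<notin> vx" "a + T - 1 \<notin> vx"
    "\<forall>c \<in> cx. \<not> (of_int (a + T - 1) \<le> c \<and> c < of_int (a + T - 1) + 1)"
    using assms(4,5) by (force simp: near_def)+
  moreover have "insert (a - 1) ({a..<a + T} - {a + T - 1}) = {a - 1..<a - 1 + T}"
    using assms(2) by auto
  ultimately show ?thesis
    using assms(1-3) free_outside_S_shift_left[of "a + T - 1"] blk_shift_x[of a] blk_shift_x[of "a + T - 1"]
      pinned_strip_exchange[of blk "{a..<a + T}" b T "\<lambda>c. free c \<and> \<not> inS c" a "a + T - 2" "a - 1" "a + T - 1"]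
    by (auto simp: pinned_window_def)
qed

lemma pinned_window_everywhere:
  assumes "pinned_window px a b T" "0 < T"
    and far: "\<And>a'. pinned_window px a' b T \<Longrightarrow>
      \<not> near (of_int ` vx \<union> cx) a' \<and> \<not> near (of_int ` vx \<union> cx) (a' + T)"
    and "px - T + 1 \<le> a'" "a' \<le> px"
  shows "pinned_window px a' b T"
proof (cases "a \<le> a'")
  case True
  then show ?thesis
    using assms(5)
  proof (induction a' rule: int_ge_induct)
    case base
    show ?case using assms(1) by simp
  next
    case (step i)
    then show ?case using pinned_window_step_right assms(2) far by simp
  qed
next
  case False
  then have "a' \<le> a" by simp
  then show ?thesis
    using assms(4)
  proof (induction a' rule: int_le_induct)
    case base
    show ?case using assms(1) by simp
  next
    case (step i)
    then show ?case using pinned_window_step_left assms(2) far by simp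
  qed
qed

lemma slide_pinned_window:
  assumes "0 < T" "inS (px, py)" "py \<in> {b..<b + T}" "pinned_window px a b T"
  shows "\<exists>a'. pinned_window px a' b T \<and> (near (of_int ` vx \<union> cx) a' \<or> near (of_int ` vx \<union> cx) (a' + T))"
proof (rule ccontr)
  let ?N = "of_int ` vx \<union> cx"
  assume "\<not> ?thesis"
  then have far: "\<not> near ?N a' \<and> \<not> near ?N (a' + T)" if "pinned_window px a' b T" for a'
    using that by blast
  note all = pinned_window_everywhere[OF assms(4,1) far]
  have "\<forall>k \<in> {px - T + 1..px + T}. \<forall>c \<in> cx. 1 < \<bar>of_int k - c\<bar>"
  proof (intro ballI)
    fix k c assume "k \<in> {px - T + 1..px + T}" "c \<in> cx"
    then show "1 < \<bar>of_int k - c\<bar>"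
      using far[OF all[of k]] far[OF all[of "k - T"]] by (cases "k \<le> px") (force simp: near_def)+
  qed
  then show False
    using pinned_strip_near_S_edge[OF assms(1) _ assms(2) _ assms(3)] assms(4)
    by (force simp: pinned_window_def)
qed

lemma slide_maximal_window_x:
  assumes "maximal_window blk a b T" "a + T \<notin> vx"
    and "inS p" "p \<in> window a b T" "free q" "\<not> inS q" "q \<in> window a b T"
  shows "\<exists>a' q. maximal_window blk a' b T \<and> p \<in> window a' b T \<and> q \<in> window a' b T \<and>
    free q \<and> \<not> inS q \<and> b + T \<in> vy \<and> (near (of_int ` vx \<union> cx) a' \<or> near (of_int ` vx \<union> cx) (a' + T))"
proof -
  obtain px py where p: "p = (px, py)"
    by (cases p)
  have T: "0 < T"
    using assms(1) by (simp add: maximal_window_def)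
  have "pinned_window px a b T"
    using maximal_window_pinned[OF assms(1,2)] assms(4-7) p by (force simp: pinned_window_def window_def)
  then obtain a' where "pinned_window px a' b T" "near (of_int ` vx \<union> cx) a' \<or> near (of_int ` vx \<union> cx) (a' + T)"
    using slide_pinned_window[OF T, of px py b a] assms(3,4) p by (auto simp: window_def)
  then show ?thesis
    using T p assms(4) pinned_strip_maximal_window[OF T] pinned_strip_top_in_vy
    by (fastforce simp: pinned_window_def window_def)
qed

lemma exists_maximal_window_corner:
  assumes "maximal_window blk a b T" "inS p" "p \<in> window a b T" "free q" "\<not> inS q" "q \<in> window a b T"
  shows "\<exists>a b q x y. maximal_window blk a b T \<and> p \<in> window a b T \<and> q \<in> window a b T \<and>
    free q \<and> \<not> inS q \<and> x \<in> {a, a + T} \<and> y \<in> {b, b + T} \<and>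
    (y \<in> vy \<and> near (of_int ` vx \<union> cx) x \<or> x \<in> vx \<and> near (of_int ` vy \<union> cy) y)"
proof -
  consider "a + T \<in> vx" "b + T \<in> vy" | "a + T \<notin> vx" | "b + T \<notin> vy"
    by blast
  then show ?thesis
  proof cases
    case 1
    then have "near (of_int ` vx \<union> cx) (a + T)"
      by (force simp: near_def)
    then show ?thesis
      using 1 assms by blast
  next
    case 2
    then show ?thesis
      using slide_maximal_window_x[OF assms(1) 2 assms(2-6)] by blast
  next
    case 3
    interpret transposed: block_grid "blk \<circ> prod.swap" "free \<circ> prod.swap" "inS \<circ> prod.swap" vy vx cy cx sy sx st
      by (rule block_grid_transpose)
    obtain b' q' where "maximal_window blk a b' T" "p \<in> window a b' T" "q' \<in> window b' a T"
      "free (prod.swap q')" "\<not> inS (prod.swap q')" "a + T \<in> vx"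
      "near (of_int ` vy \<union> cy) b' \<or> near (of_int ` vy \<union> cy) (b' + T)"
      using transposed.slide_maximal_window_x[of b a T "prod.swap p" "prod.swap q"] assms 3 by auto
    moreover have "prod.swap q' \<in> window a b' T"
      using swap_mem_window[of "prod.swap q'" b' a T] \<open>q' \<in> window b' a T\<close> by simp
    ultimately show ?thesis
      by blast
  qed
qed

end

section \<open>Maximal windows and maximal squares\<close>

definition window_square :: "int \<Rightarrow> int \<Rightarrow> int \<Rightarrow> pt set" where
  "window_square a b T = sq (rpt (a, b)) (of_int T)"

lemma block_subset_window_square: "c \<in> window a b T \<Longrightarrow> block c \<subseteq> window_square a b T"
  by (cases c) (simp add: window_def window_square_def rpt_def block_subset_sq_iff)

lemma window_square_subset_region:
  assumes "full_window (is_block vs) a b T" "0 < T"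
  shows "window_square a b T \<subseteq> region vs"
proof
  fix z assume "z \<in> window_square a b T"
  then have z: "of_int a \<le> fst z" "fst z \<le> of_int a + of_int T" "of_int b \<le> snd z" "snd z \<le> of_int b + of_int T"
    by (auto simp: window_square_def rpt_def sq_Pair)
  define i where "i = min \<lfloor>fst z\<rfloor> (a + T - 1)"
  define j where "j = min \<lfloor>snd z\<rfloor> (b + T - 1)"
  have "(i, j) \<in> window a b T" "z \<in> block (i, j)"
    using z assms(2) by (auto simp: i_def j_def window_def block_Pair mem_Times_iff; linarith)+
  then show "z \<in> region vs"
    using assms(1) by (auto simp: full_window_def is_block_def)
qed

lemma shifted_window_meets_interval:
  fixes a T :: int and c t :: real
  assumes "c \<le> of_int a" "of_int a + of_int T \<le> c + t" "of_int T < t"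
  shows "\<exists>a' \<in> {a - 1, a}. \<forall>i \<in> {a'..<a' + T + 1}. of_int i \<in> {c - 1<..<c + t}"
proof (cases "c < of_int a")
  case True
  then have "\<forall>i \<in> {a - 1..<a - 1 + T + 1}. of_int i \<in> {c - 1<..<c + t}"
    using assms(2) by auto
  then show ?thesis
    by blast
next
  case False
  then have "\<forall>i \<in> {a..<a + T + 1}. of_int i \<in> {c - 1<..<c + t}"
    using assms by auto
  then show ?thesis
    by blast
qed

lemma maximal_window_maximal_square:
  assumes "ortho_polygon vs" "maximal_window (is_block vs) a b T"
  shows "maximal_square vs (window_square a b T)"
proof -
  have T: "0 < T" and full: "full_window (is_block vs) a b T"
    using assms(2) by (simp_all add: maximal_window_def)
  have valid: "valid_square vs (window_square a b T)"
    using window_square_subset_region[OF full T] T unfolding valid_square_def window_square_def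
    by (intro conjI exI[of _ "rpt (a, b)"] exI[of _ "of_int T"]) auto
  have False if valid: "valid_square vs Q" and larger: "window_square a b T \<subseteq> Q"
    and bigger: "measure lebesgue (window_square a b T) < measure lebesgue Q" for Q
  proof -
    obtain c d t where Q: "0 < t" "Q = sq (c, d) t" "sq (c, d) t \<subseteq> region vs"
      using valid by (rule valid_squareE)
    have sub: "c \<le> of_int a" "of_int a + of_int T \<le> c + t" "d \<le> of_int b" "of_int b + of_int T \<le> d + t"
      using larger T Q(2) by (simp_all add: window_square_def rpt_def sq_subset_sq_iff)
    have "of_int T * of_int T < t * t"
      using bigger T Q by (simp add: window_square_def rpt_def measure_sq)
    then have "of_int T < t"
      using power_less_imp_less_base[of "of_int T" 2 t] Q(1) by (simp add: power2_eq_square)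
    then obtain a' b' where "a' \<in> {a - 1, a}" "b' \<in> {b - 1, b}"
      and "\<forall>i \<in> {a'..<a' + T + 1}. of_int i \<in> {c - 1<..<c + t}"
      and "\<forall>j \<in> {b'..<b' + T + 1}. of_int j \<in> {d - 1<..<d + t}"
      using shifted_window_meets_interval sub by meson
    moreover from this have "full_window (is_block vs) a' b' (T + 1)"
      using is_block_if_meets_square[OF assms(1) Q(3,1)] by (auto simp: full_window_def window_def add.assoc)
    ultimately show False
      using assms(2) by (auto simp: maximal_window_def)
  qed
  then show ?thesis
    using valid by (auto simp: maximal_square_def)
qed

lemma window_meets_interval:
  fixes c t :: real and u v m :: int
  assumes "c \<le> of_int u" "of_int u + 1 \<le> c + t" "c \<le> of_int v" "of_int v + 1 \<le> c + t"
    and "\<bar>u - v\<bar> < m" "of_int m \<le> t"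
  shows "\<exists>a. u \<in> {a..<a + m} \<and> v \<in> {a..<a + m} \<and> (\<forall>i \<in> {a..<a + m}. of_int i \<in> {c - 1<..<c + t})"
proof -
  define a where "a = max \<lfloor>c\<rfloor> (max u v + 1 - m)"
  have "\<lfloor>c\<rfloor> \<le> u" "\<lfloor>c\<rfloor> \<le> v"
    using assms(1,3) by linarith+
  then have "u \<in> {a..<a + m}" "v \<in> {a..<a + m}"
    using assms(5) by (auto simp: a_def)
  moreover have "of_int i \<in> {c - 1<..<c + t}" if "i \<in> {a..<a + m}" for i
  proof -
    have "\<lfloor>c\<rfloor> \<le> i" "i \<le> \<lfloor>c\<rfloor> + m - 1 \<or> i \<le> u \<or> i \<le> v"
      using that by (auto simp: a_def)
    then show ?thesis
      using assms(2,4,6) by auto linarith+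
  qed
  ultimately show ?thesis
    by blast
qed

lemma full_window_in_valid_square:
  assumes "ortho_polygon vs" "valid_square vs Q" "block p \<subseteq> Q" "block q \<subseteq> Q"
  shows "\<exists>a b T. 0 < T \<and> full_window (is_block vs) a b T \<and> p \<in> window a b T \<and> q \<in> window a b T"
proof -
  obtain c d t where Q: "0 < t" "Q = sq (c, d) t" "sq (c, d) t \<subseteq> region vs"
    using assms(2) by (rule valid_squareE)
  obtain px py qx qy where pq: "p = (px, py)" "q = (qx, qy)"
    by (cases p, cases q)
  define m where "m = max \<bar>px - qx\<bar> \<bar>py - qy\<bar> + 1"
  have inside: "c \<le> of_int px" "of_int px + 1 \<le> c + t" "d \<le> of_int py" "of_int py + 1 \<le> d + t"
    "c \<le> of_int qx" "of_int qx + 1 \<le> c + t" "d \<le> of_int qy" "of_int qy + 1 \<le> d + t"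
    using assms(3,4) by (simp_all add: Q(2) pq block_subset_sq_iff)
  then have "of_int \<bar>px - qx\<bar> + 1 \<le> t" "of_int \<bar>py - qy\<bar> + 1 \<le> t"
    by (simp_all add: abs_if)
  then have "of_int m \<le> t"
    by (simp add: m_def max_def)
  moreover have "\<bar>px - qx\<bar> < m" "\<bar>py - qy\<bar> < m"
    by (simp_all add: m_def)
  ultimately obtain a b where
      "px \<in> {a..<a + m}" "qx \<in> {a..<a + m}" "\<forall>i \<in> {a..<a + m}. of_int i \<in> {c - 1<..<c + t}"
      "py \<in> {b..<b + m}" "qy \<in> {b..<b + m}" "\<forall>j \<in> {b..<b + m}. of_int j \<in> {d - 1<..<d + t}"
    using window_meets_interval[OF inside(1,2,5,6)] window_meets_interval[OF inside(3,4,7,8)] by meson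
  moreover have "full_window (is_block vs) a b m"
    using calculation is_block_if_meets_square[OF assms(1) Q(3,1)]
    by (auto simp: full_window_def window_def)
  moreover have "0 < m"
    by (simp add: m_def)
  ultimately show ?thesis
    using pq by (intro exI[of _ a] exI[of _ b] exI[of _ m]) (simp add: window_def)
qed

lemma full_window_size_bounded:
  assumes "ortho_polygon vs"
  obtains K where "\<And>a b T. 0 < T \<Longrightarrow> full_window (is_block vs) a b T \<Longrightarrow> nat T < K"
proof -
  obtain B where B: "\<forall>z \<in> region vs. norm z \<le> B"
    using bounded_region[OF assms] bounded_iff by blast
  have "nat T < nat \<lceil>2 * B\<rceil> + 1" if "0 < T" "full_window (is_block vs) a b T" for a b T
  proof -
    have "(of_int a, of_int b) \<in> region vs" "(of_int (a + T), of_int b) \<in> region vs"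
      using window_square_subset_region[OF that(2,1)] that(1)
      by (auto simp: window_square_def rpt_def sq_Pair)
    then have "\<bar>of_int a\<bar> \<le> B" "\<bar>of_int (a + T)\<bar> \<le> B"
      using B norm_fst_le[of "of_int a :: real" "of_int b :: real"]
        norm_fst_le[of "of_int (a + T) :: real" "of_int b :: real"]
      by fastforce+
    then show ?thesis
      by linarith
  qed
  then show ?thesis
    using that by blast
qed

lemma exists_maximal_window:
  assumes "ortho_polygon vs" "valid_square vs Q" "block p \<subseteq> Q" "block q \<subseteq> Q"
  shows "\<exists>a b T. maximal_window (is_block vs) a b T \<and> p \<in> window a b T \<and> q \<in> window a b T"
proof -
  define P where "P w \<longleftrightarrow> (case w of (a, b, T) \<Rightarrow>
    0 < T \<and> full_window (is_block vs) a b T \<and> p \<in> window a b T \<and> q \<in> window a b T)" for w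
  obtain a b T where start: "P (a, b, T)"
    using full_window_in_valid_square[OF assms] by (auto simp: P_def)
  obtain K where K: "\<And>a b T. 0 < T \<Longrightarrow> full_window (is_block vs) a b T \<Longrightarrow> nat T < K"
    using full_window_size_bounded[OF assms(1)] by blast
  obtain a' b' T' where "P (a', b', T')" and greatest: "\<And>w. P w \<Longrightarrow> nat (snd (snd w)) \<le> nat T'"
    using Lattices_Big.ex_has_greatest_nat[of P "(a, b, T)" "\<lambda>w. nat (snd (snd w))" K] start K
    by (force simp: P_def)
  then have P': "0 < T'" "full_window (is_block vs) a' b' T'" "p \<in> window a' b' T'" "q \<in> window a' b' T'"
    by (simp_all add: P_def)
  have "\<not> full_window (is_block vs) a'' b'' (T' + 1)" if "a'' \<in> {a' - 1, a'}" "b'' \<in> {b' - 1, b'}" for a'' b''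
  proof
    assume "full_window (is_block vs) a'' b'' (T' + 1)"
    moreover have "window a' b' T' \<subseteq> window a'' b'' (T' + 1)"
      using that by (auto simp: window_def)
    ultimately have "P (a'', b'', T' + 1)"
      using P' by (auto simp: P_def)
    then show False
      using greatest[of "(a'', b'', T' + 1)"] P'(1) by simp
  qed
  then have "maximal_window (is_block vs) a' b' T'"
    using P'(1,2) by (simp add: maximal_window_def)
  then show ?thesis
    using P'(3,4) by blast
qed

section \<open>Rec-packs and the lattice abstraction\<close>

lemma rect_corners_cbox:
  assumes "a \<le> c" "b \<le> d"
  shows "rect_corners (cbox (a, b) (c, d)) = {a, c} \<times> {b, d}"
proof -
  have "cbox (a, b) (c, d) \<noteq> {}"
    using assms by (simp add: cbox_Pair_eq)
  then have "cbox (a, b) (c, d) = cbox (a', b') (c', d') \<longleftrightarrow> a' = a \<and> b' = b \<and> c' = c \<and> d' = d"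
    for a' b' c' d'
    by (auto simp: eq_cbox)
  then show ?thesis
    using assms unfolding rect_corners_def by auto
qed

lemma rec_pack_cbox:
  assumes "rec_pack vs R"
  obtains a b c d where "a \<le> c" "b \<le> d" "R = cbox (a, b) (c, d)"
  using assms unfolding rec_pack_def
  by (metis (no_types, lifting) add_increasing2 less_eq_real_def mult_nonneg_nonneg of_nat_0_le_iff)

lemma partial_solution_rec_pack: "partial_solution vs RR \<Longrightarrow> R \<in> RR \<Longrightarrow> rec_pack vs R"
  by (auto simp: partial_solution_def min_covering_def)

lemma rec_packs_exit_fst:
  assumes "\<forall>R \<in> RR. rec_pack vs R" "(x, y) \<in> \<Union>RR" "(x', y) \<notin> \<Union>RR"
  shows "\<exists>R \<in> RR. \<exists>e \<in> fst ` rect_corners R. x \<le> e \<and> e < x' \<or> x' < e \<and> e \<le> x"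
proof -
  obtain R where R: "R \<in> RR" "(x, y) \<in> R" "(x', y) \<notin> R"
    using assms(2,3) by blast
  then have "rec_pack vs R"
    using assms(1) by blast
  then obtain a b c d where "a \<le> c" "b \<le> d" "R = cbox (a, b) (c, d)"
    by (rule rec_pack_cbox)
  moreover from this have corners: "fst ` rect_corners R = {a, c}"
    by (auto simp: rect_corners_cbox)
  ultimately have "a \<le> x" "x \<le> c" "x' < a \<or> c < x'"
    using R(2,3) by (auto simp: cbox_Pair_eq)
  then show ?thesis
    using R(1) corners by (intro bexI[of _ R]) auto
qed

lemma rec_packs_exit_snd:
  assumes "\<forall>R \<in> RR. rec_pack vs R" "(x, y) \<in> \<Union>RR" "(x, y') \<notin> \<Union>RR"
  shows "\<exists>R \<in> RR. \<exists>e \<in> snd ` rect_corners R. y \<le> e \<and> e < y' \<or> y' < e \<and> e \<le> y"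
proof -
  obtain R where R: "R \<in> RR" "(x, y) \<in> R" "(x, y') \<notin> R"
    using assms(2,3) by blast
  then have "rec_pack vs R"
    using assms(1) by blast
  then obtain a b c d where "a \<le> c" "b \<le> d" "R = cbox (a, b) (c, d)"
    by (rule rec_pack_cbox)
  moreover from this have corners: "snd ` rect_corners R = {b, d}"
    by (auto simp: rect_corners_cbox)
  ultimately have "b \<le> y" "y \<le> d" "y' < b \<or> d < y'"
    using R(2,3) by (auto simp: cbox_Pair_eq)
  then show ?thesis
    using R(1) corners by (intro bexI[of _ R]) auto
qed

lemma uncovered_beside_covered_x:
  assumes "\<forall>R \<in> RR. rec_pack vs R" "uncovered vs RR (i, j)"
  shows "block (i - 1, j) \<subseteq> \<Union>RR \<Longrightarrow>
      \<exists>c \<in> (\<Union>R \<in> RR. fst ` rect_corners R). of_int i \<le> c \<and> c < of_int i + 1"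
    and "block (i + 1, j) \<subseteq> \<Union>RR \<Longrightarrow>
      \<exists>c \<in> (\<Union>R \<in> RR. fst ` rect_corners R). of_int i < c \<and> c \<le> of_int i + 1"
proof -
  obtain x y where z: "(x, y) \<in> block (i, j)" "(x, y) \<notin> \<Union>RR"
    using assms(2) by (auto simp: uncovered_def)
  then have x: "of_int i \<le> x" "x \<le> of_int i + 1" and y: "of_int j \<le> y" "y \<le> of_int j + 1"
    by (simp_all add: block_Pair)
  show "\<exists>c \<in> (\<Union>R \<in> RR. fst ` rect_corners R). of_int i \<le> c \<and> c < of_int i + 1"
    if "block (i - 1, j) \<subseteq> \<Union>RR"
  proof -
    have "(of_int i, y) \<in> block (i - 1, j)"
      using y by (simp add: block_Pair)
    then have "(of_int i, y) \<in> \<Union>RR"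
      using that by blast
    then obtain R e where "R \<in> RR" "e \<in> fst ` rect_corners R" "of_int i \<le> e \<and> e < x \<or> x < e \<and> e \<le> of_int i"
      using rec_packs_exit_fst[OF assms(1) _ z(2)] by blast
    then show ?thesis
      using x by (intro bexI[of _ e] UN_I[of R]) auto
  qed
  show "\<exists>c \<in> (\<Union>R \<in> RR. fst ` rect_corners R). of_int i < c \<and> c \<le> of_int i + 1"
    if "block (i + 1, j) \<subseteq> \<Union>RR"
  proof -
    have "(of_int i + 1, y) \<in> block (i + 1, j)"
      using y by (simp add: block_Pair)
    then have "(of_int i + 1, y) \<in> \<Union>RR"
      using that by blast
    then obtain R e where "R \<in> RR" "e \<in> fst ` rect_corners R" "of_int i + 1 \<le> e \<and> e < x \<or> x < e \<and> e \<le> of_int i + 1"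
      using rec_packs_exit_fst[OF assms(1) _ z(2)] by blast
    then show ?thesis
      using x by (intro bexI[of _ e] UN_I[of R]) auto
  qed
qed

lemma uncovered_beside_covered_y:
  assumes "\<forall>R \<in> RR. rec_pack vs R" "uncovered vs RR (i, j)"
  shows "block (i, j - 1) \<subseteq> \<Union>RR \<Longrightarrow>
      \<exists>c \<in> (\<Union>R \<in> RR. snd ` rect_corners R). of_int j \<le> c \<and> c < of_int j + 1"
    and "block (i, j + 1) \<subseteq> \<Union>RR \<Longrightarrow>
      \<exists>c \<in> (\<Union>R \<in> RR. snd ` rect_corners R). of_int j < c \<and> c \<le> of_int j + 1"
proof -
  obtain x y where z: "(x, y) \<in> block (i, j)" "(x, y) \<notin> \<Union>RR"
    using assms(2) by (auto simp: uncovered_def)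
  then have x: "of_int i \<le> x" "x \<le> of_int i + 1" and y: "of_int j \<le> y" "y \<le> of_int j + 1"
    by (simp_all add: block_Pair)
  show "\<exists>c \<in> (\<Union>R \<in> RR. snd ` rect_corners R). of_int j \<le> c \<and> c < of_int j + 1"
    if "block (i, j - 1) \<subseteq> \<Union>RR"
  proof -
    have "(x, of_int j) \<in> block (i, j - 1)"
      using x by (simp add: block_Pair)
    then have "(x, of_int j) \<in> \<Union>RR"
      using that by blast
    then obtain R e where "R \<in> RR" "e \<in> snd ` rect_corners R" "of_int j \<le> e \<and> e < y \<or> y < e \<and> e \<le> of_int j"
      using rec_packs_exit_snd[OF assms(1) _ z(2)] by blast
    then show ?thesis
      using y by (intro bexI[of _ e] UN_I[of R]) auto
  qed
  show "\<exists>c \<in> (\<Union>R \<in> RR. snd ` rect_corners R). of_int j < c \<and> c \<le> of_int j + 1"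
    if "block (i, j + 1) \<subseteq> \<Union>RR"
  proof -
    have "(x, of_int j + 1) \<in> block (i, j + 1)"
      using x by (simp add: block_Pair)
    then have "(x, of_int j + 1) \<in> \<Union>RR"
      using that by blast
    then obtain R e where "R \<in> RR" "e \<in> snd ` rect_corners R" "of_int j + 1 \<le> e \<and> e < y \<or> y < e \<and> e \<le> of_int j + 1"
      using rec_packs_exit_snd[OF assms(1) _ z(2)] by blast
    then show ?thesis
      using y by (intro bexI[of _ e] UN_I[of R]) auto
  qed
qed

lemma block_grid_polygon:
  assumes "ortho_polygon vs" "partial_solution vs RR" "S = sq (sx, sy) st" "0 < st" "S \<subseteq> region vs"
  shows "block_grid (is_block vs) (uncovered vs RR) (\<lambda>c. block c \<subseteq> S) (fst ` set vs) (snd ` set vs)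
    (\<Union>R \<in> insert S RR. fst ` rect_corners R) (\<Union>R \<in> insert S RR. snd ` rect_corners R) sx sy st"
proof unfold_locales
  have packs: "\<forall>R \<in> RR. rec_pack vs R"
    using assms(2) partial_solution_rec_pack by blast
  have covered: "block c \<subseteq> \<Union>RR" if "is_block vs c" "\<not> uncovered vs RR c" for c
    using that by (simp add: uncovered_def)
  fix i j
  show "is_block vs (i - 1, j) = is_block vs (i, j)" if "i \<notin> fst ` set vs"
    using is_block_shift_x[OF assms(1) that] .
  show "is_block vs (i, j - 1) = is_block vs (i, j)" if "j \<notin> snd ` set vs"
    using is_block_shift_y[OF assms(1) that] .
  show "\<exists>c \<in> \<Union>R \<in> insert S RR. fst ` rect_corners R. of_int i \<le> c \<and> c < of_int i + 1"
    if "uncovered vs RR (i, j)" "is_block vs (i - 1, j)" "\<not> uncovered vs RR (i - 1, j)"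
    using uncovered_beside_covered_x(1)[OF packs that(1) covered[OF that(2,3)]] by blast
  show "\<exists>c \<in> \<Union>R \<in> insert S RR. fst ` rect_corners R. of_int i < c \<and> c \<le> of_int i + 1"
    if "uncovered vs RR (i, j)" "is_block vs (i + 1, j)" "\<not> uncovered vs RR (i + 1, j)"
    using uncovered_beside_covered_x(2)[OF packs that(1) covered[OF that(2,3)]] by blast
  show "\<exists>c \<in> \<Union>R \<in> insert S RR. snd ` rect_corners R. of_int j \<le> c \<and> c < of_int j + 1"
    if "uncovered vs RR (i, j)" "is_block vs (i, j - 1)" "\<not> uncovered vs RR (i, j - 1)"
    using uncovered_beside_covered_y(1)[OF packs that(1) covered[OF that(2,3)]] by blast
  show "\<exists>c \<in> \<Union>R \<in> insert S RR. snd ` rect_corners R. of_int j < c \<and> c \<le> of_int j + 1"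
    if "uncovered vs RR (i, j)" "is_block vs (i, j + 1)" "\<not> uncovered vs RR (i, j + 1)"
    using uncovered_beside_covered_y(2)[OF packs that(1) covered[OF that(2,3)]] by blast
  show "block (i, j) \<subseteq> S \<longleftrightarrow>
      sx \<le> of_int i \<and> of_int i + 1 \<le> sx + st \<and> sy \<le> of_int j \<and> of_int j + 1 \<le> sy + st"
    by (simp add: assms(3) block_subset_sq_iff)
next
  show "block c \<subseteq> S \<Longrightarrow> is_block vs c" for c
    using assms(5) by (auto simp: is_block_def)
  have "rect_corners S = {sx, sx + st} \<times> {sy, sy + st}"
    using assms(3,4) by (simp add: sq_def rect_corners_cbox)
  then show "sx \<in> (\<Union>R \<in> insert S RR. fst ` rect_corners R)" "sx + st \<in> (\<Union>R \<in> insert S RR. fst ` rect_corners R)"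
    "sy \<in> (\<Union>R \<in> insert S RR. snd ` rect_corners R)" "sy + st \<in> (\<Union>R \<in> insert S RR. snd ` rect_corners R)"
    by force+
qed

lemma rpt_mem_rect_corners_window_square:
  assumes "0 \<le> T" "x \<in> {a, a + T}" "y \<in> {b, b + T}"
  shows "rpt (x, y) \<in> rect_corners (window_square a b T)"
  using assms by (auto simp: window_square_def sq_def rpt_def rect_corners_cbox)

lemma mem_D_x_iff:
  "(x, y) \<in> D_x vs RR \<longleftrightarrow> y \<in> snd ` set vs \<and> near (of_int ` fst ` set vs \<union> (\<Union>R \<in> RR. fst ` rect_corners R)) x"
  by (auto simp: D_x_def near_def)

lemma mem_D_y_iff:
  "(x, y) \<in> D_y vs RR \<longleftrightarrow> x \<in> fst ` set vs \<and> near (of_int ` snd ` set vs \<union> (\<Union>R \<in> RR. snd ` rect_corners R)) y"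
  by (auto simp: D_y_def near_def)

theorem lemma4p11:
  fixes vs :: "(int \<times> int) list" and RR :: "(real \<times> real) set set"
    and S :: "(real \<times> real) set" and p p1 :: "int \<times> int"
  assumes "ortho_polygon vs"
    and "partial_solution vs RR"
    and "\<Union>RR \<noteq> region vs"
    and "valid_square vs S"
    and "adjGR vs RR p p1"
    and "block p \<subseteq> S"
    and "\<not> block p1 \<subseteq> S"
  shows "\<exists>p'. adjGR vs RR p p' \<and> \<not> block p' \<subseteq> S \<and>
           (\<exists>Sstar. maximal_square vs Sstar \<and> block p \<subseteq> Sstar \<and> block p' \<subseteq> Sstar \<and>
              (\<exists>c \<in> D_x vs (insert S RR) \<union> D_y vs (insert S RR). rpt c \<in> rect_corners Sstar))"
proof -
  obtain sx sy st where S: "0 < st" "S = sq (sx, sy) st" "sq (sx, sy) st \<subseteq> region vs"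
    using assms(4) by (rule valid_squareE)
  interpret block_grid "is_block vs" "uncovered vs RR" "\<lambda>c. block c \<subseteq> S" "fst ` set vs" "snd ` set vs"
    "\<Union>R \<in> insert S RR. fst ` rect_corners R" "\<Union>R \<in> insert S RR. snd ` rect_corners R" sx sy st
    using block_grid_polygon[OF assms(1,2) S(2,1)] S(2,3) by simp
  have p: "uncovered vs RR p" and p1: "uncovered vs RR p1" "adjG vs p p1"
    using assms(5) by (simp_all add: adjGR_def)
  then obtain Q where "valid_square vs Q" "block p \<subseteq> Q" "block p1 \<subseteq> Q"
    by (auto simp: adjG_def)
  then obtain a b T where W: "maximal_window (is_block vs) a b T" "p \<in> window a b T" "p1 \<in> window a b T"
    using exists_maximal_window[OF assms(1)] by blast
  obtain a b q x y where W': "maximal_window (is_block vs) a b T" "p \<in> window a b T" "q \<in> window a b T"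
      and q: "uncovered vs RR q" "\<not> block q \<subseteq> S" and xy: "x \<in> {a, a + T}" "y \<in> {b, b + T}"
      and "y \<in> snd ` set vs \<and> near (of_int ` fst ` set vs \<union> (\<Union>R \<in> insert S RR. fst ` rect_corners R)) x \<or>
        x \<in> fst ` set vs \<and> near (of_int ` snd ` set vs \<union> (\<Union>R \<in> insert S RR. snd ` rect_corners R)) y"
    using exists_maximal_window_corner[OF W(1) assms(6) W(2) p1(1) assms(7) W(3)] by blast
  then have "(x, y) \<in> D_x vs (insert S RR) \<union> D_y vs (insert S RR)"
    by (simp only: Un_iff mem_D_x_iff mem_D_y_iff)
  moreover have "rpt (x, y) \<in> rect_corners (window_square a b T)"
    using W'(1) xy by (intro rpt_mem_rect_corners_window_square) (simp_all add: maximal_window_def)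
  moreover have Sstar: "maximal_square vs (window_square a b T)"
    "block p \<subseteq> window_square a b T" "block q \<subseteq> window_square a b T"
    using maximal_window_maximal_square[OF assms(1) W'(1)] W'(2,3) by (simp_all add: block_subset_window_square)
  moreover have "adjGR vs RR p q"
    using p q assms(6) Sstar by (auto simp: adjGR_def adjG_def uncovered_def maximal_square_def)
  ultimately show ?thesis
    using q(2) by blast
qed

end
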